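(* There is a constant $C_3>0$ such that for every $\ell\ge1$ and all $p,q\in\mathbb N\times\mathbb Z$, $$(G_1\cdot G_2)^\ell(p,q)\le C_3^{|p|+|q|}.$$ Moreover, if $(G_1\cdot G_2)^\ell(p,q)\ne0$ then $q-p\in\Sigma_\ell$, where $$\Sigma_\ell=\{(x,y)\in\mathbb Z^2:\ x+y\ge\ell,\ y\ge-2\ell,\ 4x+3y\ge0,\ 2x+3y\ge0,\ y\text{ even}\}.$$
   Context: $\mathbb N=\{0,1,2,\dots\}$; for $t\in\mathbb R$, $\langle t\rangle:=1+|t|$. A directed weighted $\mathbb Z^2$-graph is a map $G\colon\mathbb Z^2\times\mathbb Z^2\to[0,\infty)$. The product is $(G\cdot G')(p,q)=\sum_{r\in\mathbb Z^2}G(p,r)G'(r,q)$, and $G^\ell$ is the $\ell$-fold product of $G$ with itself. $G_1$ is the graph whose only nonzero weights are: $G_1((k,h),(k-2,h+2))=\frac{\langle\max\{k,|h|\}\rangle}{\langle h\rangle}$ for $k\ge2$, $h\in\mathbb Z$; $G_1((k,h),(k,h))=1$ for $k\ge0$, $h\in\mathbb Z$; $G_1((k,h),(k+2,h-2))=\frac{\langle h\rangle}{\langle\max\{k,|h|\}\rangle}$ for $k\ge0$, $h\in\mathbb Z$. $G_2((k,h),(k',h'))=1$ if $k,k'\ge0$, $(k,h)\ne(k',h')$ and $(k'-k,h'-h)\in\{c_1(1,0)+c_2(-1,2): c_1,c_2\in\mathbb N\}$, and $G_2((k,h),(k',h'))=0$ otherwise. *)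

theory Defs
  imports "HOL-Analysis.Analysis"
begin

text \<open>Points of Z^2 are pairs of integers. Weighted directed graphs take values in
  [0,\<infinity>); we use ennreal so that the (possibly infinite) sums defining the
  product are always meaningful.\<close>

type_synonym zgraph = "int \<times> int \<Rightarrow> int \<times> int \<Rightarrow> ennreal"

definition jbr :: "real \<Rightarrow> real" where
  "jbr t = 1 + \<bar>t\<bar>"

definition gprod :: "zgraph \<Rightarrow> zgraph \<Rightarrow> zgraph" where
  "gprod G G' p q = (\<Sum>\<^sub>\<infinity> r\<in>(UNIV :: (int \<times> int) set). G p r * G' r q)"

definition gid :: zgraph where
  "gid p q = (if p = q then 1 else 0)"

primrec gpow :: "zgraph \<Rightarrow> nat \<Rightarrow> zgraph" where
  "gpow G 0 = gid"
| "gpow G (Suc n) = (if n = 0 then G else gprod (gpow G n) G)"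

definition G1 :: zgraph where
  "G1 p q = (let k = fst p; h = snd p in
     if k \<ge> 2 \<and> q = (k - 2, h + 2) then
       ennreal (jbr (real_of_int (max k \<bar>h\<bar>)) / jbr (real_of_int h))
     else if k \<ge> 0 \<and> q = (k, h) then 1
     else if k \<ge> 0 \<and> q = (k + 2, h - 2) then
       ennreal (jbr (real_of_int h) / jbr (real_of_int (max k \<bar>h\<bar>)))
     else 0)"

definition G2 :: zgraph where
  "G2 p q = (if fst p \<ge> 0 \<and> fst q \<ge> 0 \<and> p \<noteq> q \<and>
       (\<exists>c1 c2 :: nat. fst q - fst p = int c1 - int c2 \<and> snd q - snd p = 2 * int c2)
     then 1 else 0)"

definition Sigma_set :: "nat \<Rightarrow> (int \<times> int) set" where
  "Sigma_set l = {(x, y). x + y \<ge> int l \<and> y \<ge> - 2 * int l \<and> 4 * x + 3 * y \<ge> 0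
                    \<and> 2 * x + 3 * y \<ge> 0 \<and> even y}"

definition norm1 :: "int \<times> int \<Rightarrow> real" where
  "norm1 p = real_of_int (\<bar>fst p\<bar> + \<bar>snd p\<bar>)"

end

theory Submission
  imports Defs
begin

text \<open>
  The idea is to find a gauge \<open>\<psi>\<close> on \<open>\<int>\<^sup>2\<close> for which \<open>G\<^sub>1\<cdot>G\<^sub>2\<close> is dominated by a
  conjugated convolution kernel, \<open>(G\<^sub>1\<cdot>G\<^sub>2)(r,q) \<le> e\<^bsup>\<psi>(q)-\<psi>(r)\<^esup> W(q-r)\<close> with \<open>\<Sum> W < \<infinity>\<close>.
  Then \<open>(G\<^sub>1\<cdot>G\<^sub>2)\<^sup>\<ell>(p,q) \<le> (\<Sum> W)\<^sup>\<ell> e\<^bsup>\<psi>(q)-\<psi>(p)\<^esup>\<close>, and since each step raises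
  \<open>x + y\<close> by at least one (this is also where the support claim comes from),
  \<open>\<ell> \<le> |p| + |q|\<close>; as \<open>\<psi>\<close> grows linearly, the bound is exponential in \<open>|p| + |q|\<close>.

  The gauge has two parts. The potential \<open>P(k,h) = h/2 \<cdot> log(\<langle>max k |h|\<rangle> / \<langle>h\<rangle>)\<close> makes
  the weights of \<open>G\<^sub>1\<close> telescope: each of them is at most \<open>e\<^sup>4 e\<^bsup>P(s)-P(r)\<^esup>\<close>. A step
  \<open>c\<^sub>1(1,0) + c\<^sub>2(-1,2)\<close> of \<open>G\<^sub>2\<close> lowers \<open>P\<close> by at most \<open>4(c\<^sub>1+c\<^sub>2)\<close>, which the second part
  \<open>(4 + ln 8)(x + y)\<close> absorbs while leaving the summable profile \<open>8\<^bsup>-(x+y)\<^esup>\<close>.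
\<close>

lemma mult_ln_diff_le_abs_diff:
  fixes a x y :: real
  assumes "0 \<le> a" "a \<le> y" "0 < x" "0 < y"
  shows "a * (ln x - ln y) \<le> \<bar>x - y\<bar>"
proof (cases "x \<le> y")
  case True
  then have "ln x - ln y \<le> 0" using assms by simp
  then have "a * (ln x - ln y) \<le> 0" using assms(1) by (simp add: mult_nonneg_nonpos)
  then show ?thesis by linarith
next
  case False
  have "a * (ln x - ln y) \<le> a * ((x - y) / y)"
    using assms by (intro mult_left_mono ln_diff_le) auto
  also have "\<dots> \<le> y * ((x - y) / y)"
    using assms False by (intro mult_right_mono) auto
  finally show ?thesis using assms by simp
qed

lemma mult_abs_ln_diff_le:
  fixes a x y :: real
  assumes "0 \<le> a" "a \<le> x" "a \<le> y" "0 < x" "0 < y"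
  shows "a * \<bar>ln x - ln y\<bar> \<le> \<bar>x - y\<bar>"
  using mult_ln_diff_le_abs_diff[of a y x] mult_ln_diff_le_abs_diff[of a x y] assms
  by (cases "ln y \<le> ln x") (auto simp: abs_minus_commute)

lemma power_mult_exp_le_powr:
  fixes S N x c :: real
  assumes "1 \<le> S" "real l \<le> N" "x \<le> c * N"
  shows "S ^ l * exp x \<le> (S * exp c) powr N"
proof -
  have "S ^ l = S powr real l" using assms(1) by (simp add: powr_realpow)
  also have "\<dots> \<le> S powr N" using assms by (intro powr_mono) auto
  finally have "S ^ l \<le> S powr N" .
  moreover have "exp x \<le> exp c powr N" using assms(3) by (simp add: powr_def mult.commute)
  ultimately have "S ^ l * exp x \<le> S powr N * exp c powr N" by (intro mult_mono) auto
  also have "\<dots> = (S * exp c) powr N" using assms(1) by (simp add: powr_mult)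
  finally show ?thesis .
qed

lemma sum_half_power_le: "finite A \<Longrightarrow> (\<Sum>a\<in>A. (1/2::real) ^ a) \<le> 2"
  using sum_le_suminf[of "\<lambda>n. (1/2::real) ^ n" A] suminf_geometric[of "1/2::real"]
  by (simp add: summable_geometric)

lemma eighth_power_le_half_powers:
  assumes "u \<le> 2 * d + 4"
  shows "(1/8::real) ^ d \<le> 16 * ((1/2) ^ u * (1/2) ^ d)"
proof -
  have "(1/8::real) ^ d = 16 * ((1/2) ^ (2 * d + 4) * (1/2) ^ d)"
    by (simp add: power_add power_mult power_one_over flip: power_mult_distrib)
  also have "\<dots> \<le> 16 * ((1/2) ^ u * (1/2) ^ d)"
    using assms by (intro mult_left_mono mult_right_mono power_decreasing) auto
  finally show ?thesis .
qed

lemma gprod_nonzeroE: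
  assumes "gprod G G' p q \<noteq> 0"
  obtains r where "G p r * G' r q \<noteq> 0"
  using assms infsum_0[of UNIV "\<lambda>r. G p r * G' r q"] unfolding gprod_def by blast

lemma gpow_Suc_eq: "n \<ge> 1 \<Longrightarrow> gpow G (Suc n) = gprod (gpow G n) G"
  by simp

lemma Sigma_set_add: "a \<in> Sigma_set m \<Longrightarrow> b \<in> Sigma_set 1 \<Longrightarrow> a + b \<in> Sigma_set (Suc m)"
  unfolding Sigma_set_def by (cases a, cases b) auto

lemma Sigma_set_le_norm1:
  assumes "q - p \<in> Sigma_set l"
  shows "real l \<le> norm1 p + norm1 q"
proof -
  have "int l \<le> fst q - fst p + (snd q - snd p)"
    using assms by (auto simp: Sigma_set_def case_prod_beta)
  then have "real l \<le> real_of_int (fst q - fst p + (snd q - snd p))"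
    by (metis of_int_le_iff of_int_of_nat_eq)
  then show ?thesis by (simp add: norm1_def)
qed

lemma gpow_support:
  assumes G: "\<And>r q. G r q \<noteq> 0 \<Longrightarrow> q - r \<in> Sigma_set 1"
    and "l \<ge> 1" "gpow G l p q \<noteq> 0"
  shows "q - p \<in> Sigma_set l"
  using assms(2,3)
proof (induction l arbitrary: q rule: nat_induct_at_least)
  case base
  then show ?case using G by simp
next
  case (Suc n)
  from Suc.prems have "gprod (gpow G n) G p q \<noteq> 0"
    unfolding gpow_Suc_eq[OF Suc.hyps] .
  then obtain r where "gpow G n p r * G r q \<noteq> 0"
    by (rule gprod_nonzeroE)
  then have "(r - p) + (q - r) \<in> Sigma_set (Suc n)"
    using Suc.IH G by (intro Sigma_set_add) auto
  then show ?case by simp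
qed

lemma gpow_le_gauge:
  fixes G :: zgraph and \<psi> W :: "int \<times> int \<Rightarrow> real"
  assumes G_le: "\<And>r q. G r q \<le> ennreal (exp (\<psi> q - \<psi> r) * W (q - r))"
    and W_nonneg: "\<And>v. W v \<ge> 0"
    and W_sum: "\<And>F. finite F \<Longrightarrow> sum W F \<le> S"
    and "l \<ge> 1"
  shows "gpow G l p q \<le> ennreal (S ^ l * exp (\<psi> q - \<psi> p))"
  using \<open>l \<ge> 1\<close>
proof (induction l arbitrary: q rule: nat_induct_at_least)
  case base
  have "W (q - p) \<le> S" using W_sum[of "{q - p}"] by simp
  then have "exp (\<psi> q - \<psi> p) * W (q - p) \<le> S * exp (\<psi> q - \<psi> p)"
    by (simp add: mult.commute)
  then show ?case using G_le[of p q] by (simp add: order_trans ennreal_leI)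
next
  case (Suc n)
  have S: "S \<ge> 0" using W_sum[of "{}"] by simp
  have "gpow G (Suc n) p q = (\<Sum>\<^sub>\<infinity>r. gpow G n p r * G r q)"
    unfolding gpow_Suc_eq[OF Suc.hyps] gprod_def ..
  also have "\<dots> \<le> ennreal (S ^ Suc n * exp (\<psi> q - \<psi> p))"
  proof (rule infsum_le_finite_sums)
    fix F :: "(int \<times> int) set" assume "finite F"
    have "(\<Sum>r\<in>F. gpow G n p r * G r q)
        \<le> (\<Sum>r\<in>F. ennreal (S ^ n * exp (\<psi> q - \<psi> p) * W (q - r)))"
    proof (rule sum_mono)
      fix r
      have "gpow G n p r * G r q
          \<le> ennreal (S ^ n * exp (\<psi> r - \<psi> p)) * ennreal (exp (\<psi> q - \<psi> r) * W (q - r))"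
        by (intro mult_mono Suc.IH G_le) simp_all
      also have "\<dots> = ennreal (S ^ n * exp (\<psi> q - \<psi> p) * W (q - r))"
        using S W_nonneg[of "q - r"]
        by (simp add: ennreal_mult[symmetric] mult_ac flip: exp_add)
      finally show "gpow G n p r * G r q \<le> ennreal (S ^ n * exp (\<psi> q - \<psi> p) * W (q - r))" .
    qed
    also have "\<dots> = ennreal (S ^ n * exp (\<psi> q - \<psi> p) * (\<Sum>r\<in>F. W (q - r)))"
      using S W_nonneg by (simp add: sum_ennreal sum_distrib_left)
    also have "\<dots> \<le> ennreal (S ^ Suc n * exp (\<psi> q - \<psi> p))"
    proof (rule ennreal_leI)
      let ?E = "S ^ n * exp (\<psi> q - \<psi> p)"
      have "(\<Sum>r\<in>F. W (q - r)) = sum W ((\<lambda>r. q - r) ` F)"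
        by (subst sum.reindex) (auto intro: inj_onI)
      also have "\<dots> \<le> S" using \<open>finite F\<close> by (intro W_sum) simp
      finally have "?E * (\<Sum>r\<in>F. W (q - r)) \<le> ?E * S"
        using S by (intro mult_left_mono) simp_all
      then show "?E * (\<Sum>r\<in>F. W (q - r)) \<le> S ^ Suc n * exp (\<psi> q - \<psi> p)"
        by (simp add: mult_ac)
    qed
    finally show "(\<Sum>r\<in>F. gpow G n p r * G r q) \<le> ennreal (S ^ Suc n * exp (\<psi> q - \<psi> p))" .
  qed (simp add: nonneg_summable_on_complete)
  finally show ?case .
qed

definition jbr_max :: "int \<times> int \<Rightarrow> real" where
  "jbr_max v = jbr (real_of_int (max (fst v) \<bar>snd v\<bar>))"

definition jbr_snd :: "int \<times> int \<Rightarrow> real" where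
  "jbr_snd v = jbr (real_of_int (snd v))"

definition log_ratio :: "int \<times> int \<Rightarrow> real" where
  "log_ratio v = ln (jbr_max v) - ln (jbr_snd v)"

definition potential :: "int \<times> int \<Rightarrow> real" where
  "potential v = real_of_int (snd v) / 2 * log_ratio v"

lemma jbr_max_eq: "jbr_max v = 1 + real_of_int (max (fst v) \<bar>snd v\<bar>)"
  by (simp add: jbr_max_def jbr_def)

lemma jbr_snd_eq: "jbr_snd v = 1 + real_of_int \<bar>snd v\<bar>"
  by (simp add: jbr_snd_def jbr_def)

lemma jbr_snd_pos: "jbr_snd v > 0"
  by (simp add: jbr_snd_eq add_pos_nonneg)

lemma jbr_snd_le_jbr_max: "jbr_snd v \<le> jbr_max v"
  by (simp add: jbr_snd_eq jbr_max_eq)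

lemma jbr_max_pos: "jbr_max v > 0"
  using jbr_snd_pos jbr_snd_le_jbr_max by (rule less_le_trans)

lemma log_ratio_nonneg: "log_ratio v \<ge> 0"
  using jbr_snd_pos[of v] jbr_snd_le_jbr_max[of v] by (simp add: log_ratio_def)

lemma abs_potential_le: "\<bar>potential v\<bar> \<le> \<bar>real_of_int (fst v)\<bar> / 2"
proof -
  have "\<bar>real_of_int (snd v)\<bar> * log_ratio v \<le> \<bar>jbr_max v - jbr_snd v\<bar>"
    unfolding log_ratio_def
    by (rule mult_ln_diff_le_abs_diff) (auto simp: jbr_snd_pos jbr_max_pos jbr_snd_eq)
  also have "\<dots> \<le> \<bar>real_of_int (fst v)\<bar>"
    by (auto simp: jbr_max_eq jbr_snd_eq)
  finally show ?thesis
    using log_ratio_nonneg[of v] by (simp add: potential_def abs_mult)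
qed

lemma abs_potential_shift_le:
  assumes "\<bar>fst v' - fst v\<bar> \<le> 2" "\<bar>snd v' - snd v\<bar> \<le> 2"
  shows "\<bar>real_of_int (snd v')\<bar> / 2 * \<bar>log_ratio v' - log_ratio v\<bar> \<le> 4"
proof -
  let ?a = "\<bar>real_of_int (snd v')\<bar> / 2"
  have "?a * \<bar>ln (jbr_max v') - ln (jbr_max v)\<bar> \<le> \<bar>jbr_max v' - jbr_max v\<bar>"
    using assms by (intro mult_abs_ln_diff_le) (auto simp: jbr_max_pos jbr_max_eq)
  also have "\<dots> \<le> 2"
    using assms by (auto simp: jbr_max_eq)
  finally have m: "?a * \<bar>ln (jbr_max v') - ln (jbr_max v)\<bar> \<le> 2" .
  have "?a * \<bar>ln (jbr_snd v') - ln (jbr_snd v)\<bar> \<le> \<bar>jbr_snd v' - jbr_snd v\<bar>"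
    using assms by (intro mult_abs_ln_diff_le) (auto simp: jbr_snd_pos jbr_snd_eq)
  also have "\<dots> \<le> 2"
    using assms by (auto simp: jbr_snd_eq)
  finally have t: "?a * \<bar>ln (jbr_snd v') - ln (jbr_snd v)\<bar> \<le> 2" .
  have "\<bar>log_ratio v' - log_ratio v\<bar>
      \<le> \<bar>ln (jbr_max v') - ln (jbr_max v)\<bar> + \<bar>ln (jbr_snd v') - ln (jbr_snd v)\<bar>"
    by (simp add: log_ratio_def)
  then have "?a * \<bar>log_ratio v' - log_ratio v\<bar>
      \<le> ?a * \<bar>ln (jbr_max v') - ln (jbr_max v)\<bar> + ?a * \<bar>ln (jbr_snd v') - ln (jbr_snd v)\<bar>"
    by (simp add: mult_left_mono flip: distrib_left)
  with m t show ?thesis by linarith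
qed

lemma potential_G2_step_le:
  fixes c1 c2 :: nat
  shows "potential s - potential (s + (int c1 - int c2, 2 * int c2))
         \<le> 4 * (real c1 + real c2)"
proof -
  define s' where "s' = s + (int c1 - int c2, 2 * int c2)"
  define h where "h = real_of_int (snd s)"
  define h' where "h' = real_of_int (snd s')"
  have h': "h' = h + 2 * real c2" by (simp add: h_def h'_def s'_def)
  have m: "\<bar>jbr_max s - jbr_max s'\<bar> \<le> real c1 + 2 * real c2"
    by (auto simp: jbr_max_eq s'_def)
  have t: "\<bar>jbr_snd s - jbr_snd s'\<bar> \<le> 2 * real c2"
    by (auto simp: jbr_snd_eq s'_def)
  have P: "potential s = h / 2 * log_ratio s" "potential s' = h' / 2 * log_ratio s'"
    by (simp_all add: potential_def h_def h'_def)
  consider "h \<ge> 0" | "h < 0" "h' \<ge> 0" | "h' < 0" by linarith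
  then have "potential s - potential s' \<le> real c1 + 4 * real c2"
  proof cases
    case 1
    have "potential s - potential s'
        = h / 2 * (log_ratio s - log_ratio s') - real c2 * log_ratio s'"
      by (simp add: P h' algebra_simps)
    also have "\<dots> \<le> h / 2 * (log_ratio s - log_ratio s')"
      using log_ratio_nonneg[of s'] by simp
    also have "\<dots> = h / 2 * (ln (jbr_max s) - ln (jbr_max s'))
                   + h / 2 * (ln (jbr_snd s') - ln (jbr_snd s))"
      by (simp add: log_ratio_def algebra_simps)
    also have "\<dots> \<le> \<bar>jbr_max s - jbr_max s'\<bar> + \<bar>jbr_snd s' - jbr_snd s\<bar>"
      using 1 h' by (intro add_mono mult_ln_diff_le_abs_diff)
        (auto simp: jbr_max_pos jbr_snd_pos jbr_max_eq jbr_snd_eq h_def h'_def)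
    finally show ?thesis using m t by (simp add: abs_minus_commute)
  next
    case 2
    then have "potential s \<le> 0" "potential s' \<ge> 0"
      using log_ratio_nonneg[of s] log_ratio_nonneg[of s']
      by (simp_all add: P mult_nonpos_nonneg)
    then show ?thesis by simp
  next
    case 3
    have "potential s - potential s'
        = - h' / 2 * (log_ratio s' - log_ratio s) - real c2 * log_ratio s"
      by (simp add: P h' algebra_simps)
    also have "\<dots> \<le> - h' / 2 * (log_ratio s' - log_ratio s)"
      using log_ratio_nonneg[of s] by simp
    also have "\<dots> = - h' / 2 * (ln (jbr_max s') - ln (jbr_max s))
                   + - h' / 2 * (ln (jbr_snd s) - ln (jbr_snd s'))"
      by (simp add: log_ratio_def algebra_simps)
    also have "\<dots> \<le> \<bar>jbr_max s' - jbr_max s\<bar> + \<bar>jbr_snd s - jbr_snd s'\<bar>"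
      using 3 h' by (intro add_mono mult_ln_diff_le_abs_diff)
        (auto simp: jbr_max_pos jbr_snd_pos jbr_max_eq jbr_snd_eq h_def h'_def)
    finally show ?thesis using m t by (simp add: abs_minus_commute)
  qed
  then show ?thesis by (simp add: s'_def)
qed

lemma G1_nonzero_cases:
  assumes "G1 r s \<noteq> 0"
  obtains e :: int where "e \<in> {-1, 0, 1}" "s = r + (-2 * e, 2 * e)"
    "G1 r s = ennreal (exp (real_of_int e * log_ratio r))"
proof -
  obtain k h where r: "r = (k, h)" by (cases r)
  have "exp (log_ratio r) = jbr_max r / jbr_snd r"
    by (simp add: log_ratio_def exp_diff jbr_max_pos jbr_snd_pos)
  moreover have "exp (- log_ratio r) = jbr_snd r / jbr_max r"
    by (simp add: log_ratio_def exp_diff jbr_max_pos jbr_snd_pos)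
  ultimately show ?thesis
    using assms that[of 1] that[of 0] that[of "-1"]
    unfolding G1_def r by (auto simp: Let_def jbr_max_def jbr_snd_def split: if_splits)
qed

lemma exp_log_ratio_le_potential:
  assumes "e \<in> {-1, 0, 1}"
  shows "exp (real_of_int e * log_ratio r)
         \<le> exp 4 * exp (potential (r + (-2 * e, 2 * e)) - potential r)"
proof -
  define s where "s = r + (-2 * e, 2 * e)"
  have "potential s - potential r
      = real_of_int (snd s) / 2 * (log_ratio s - log_ratio r) + real_of_int e * log_ratio r"
    by (simp add: potential_def s_def algebra_simps)
  moreover have "\<bar>real_of_int (snd s) / 2 * (log_ratio s - log_ratio r)\<bar> \<le> 4"
    using abs_potential_shift_le[of s r] assms by (auto simp: s_def abs_mult)
  ultimately have "real_of_int e * log_ratio r \<le> 4 + (potential s - potential r)"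
    by (simp add: abs_le_iff)
  then show ?thesis
    unfolding s_def[symmetric] by (simp flip: exp_add)
qed

lemma G1_G2_term:
  assumes "G1 r s * G2 s q \<noteq> 0"
  obtains e :: int and c1 c2 :: nat
  where "e \<in> {-1, 0, 1}" "c1 + c2 \<ge> 1"
    "q - r = (int c1 - int c2 - 2 * e, 2 * int c2 + 2 * e)"
    "G1 r s * G2 s q
       \<le> ennreal (exp 4 * exp (potential q - potential r + 4 * (real c1 + real c2)))"
proof -
  from assms have "G1 r s \<noteq> 0" "G2 s q \<noteq> 0" by auto
  from G1_nonzero_cases[OF this(1)] obtain e :: int where e: "e \<in> {-1, 0, 1}"
    and s: "s = r + (-2 * e, 2 * e)" and G1_eq: "G1 r s = ennreal (exp (real_of_int e * log_ratio r))" .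
  from \<open>G2 s q \<noteq> 0\<close> have G2_eq: "G2 s q = 1" and "s \<noteq> q"
    and "\<exists>c1 c2 :: nat. fst q - fst s = int c1 - int c2 \<and> snd q - snd s = 2 * int c2"
    unfolding G2_def by (auto split: if_splits)
  then obtain c1 c2 :: nat
    where "fst q - fst s = int c1 - int c2" "snd q - snd s = 2 * int c2" by blast
  then have q: "q = s + (int c1 - int c2, 2 * int c2)" by (simp add: prod_eq_iff)
  have "exp (real_of_int e * log_ratio r) \<le> exp 4 * exp (potential s - potential r)"
    using exp_log_ratio_le_potential[OF e, of r] by (simp add: s)
  also have "\<dots> \<le> exp 4 * exp (potential q - potential r + 4 * (real c1 + real c2))"
    using potential_G2_step_le[of s c1 c2] by (simp add: q)
  finally have "exp (real_of_int e * log_ratio r)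
      \<le> exp 4 * exp (potential q - potential r + 4 * (real c1 + real c2))" .
  moreover have "c1 + c2 \<ge> 1" using \<open>s \<noteq> q\<close> q by (cases s) auto
  moreover have "q - r = (int c1 - int c2 - 2 * e, 2 * int c2 + 2 * e)"
    using q s by (cases r) simp
  ultimately show ?thesis
    using that[OF e] by (simp add: G1_eq G2_eq ennreal_leI)
qed

definition step_region :: "(int \<times> int) set" where
  "step_region = {v. -2 \<le> snd v \<and> -2 \<le> 2 * fst v + snd v \<and> 0 \<le> fst v + snd v}"

definition step_profile :: "int \<times> int \<Rightarrow> real" where
  "step_profile v = (if v \<in> step_region then 3 * exp 4 * (1/8) ^ nat (fst v + snd v) else 0)"

definition kernel_gauge :: "int \<times> int \<Rightarrow> real" where
  "kernel_gauge v = potential v + (4 + ln 8) * real_of_int (fst v + snd v)"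

lemma step_profile_nonneg: "step_profile v \<ge> 0"
  by (simp add: step_profile_def)

lemma exp_four_mult_eq: "exp (4 * real n) = exp ((4 + ln 8) * real n) * (1/8) ^ n"
proof -
  have "exp (ln 8 * real n) = 8 ^ n"
    using exp_of_nat_mult[of n "ln (8::real)"] by (simp add: mult.commute)
  then show ?thesis
    by (simp add: distrib_right exp_add power_one_over)
qed

lemma G1_G2_term_le:
  assumes "G1 r s * G2 s q \<noteq> 0"
  shows "q - r \<in> step_region" "q - r \<in> Sigma_set 1"
    "G1 r s * G2 s q
       \<le> ennreal (exp (kernel_gauge q - kernel_gauge r) * step_profile (q - r) / 3)"
proof -
  from G1_G2_term[OF assms] obtain e :: int and c1 c2 :: nat where e: "e \<in> {-1, 0, 1}"
    and c: "c1 + c2 \<ge> 1" and d: "q - r = (int c1 - int c2 - 2 * e, 2 * int c2 + 2 * e)"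
    and le: "G1 r s * G2 s q
      \<le> ennreal (exp 4 * exp (potential q - potential r + 4 * (real c1 + real c2)))" .
  show T: "q - r \<in> step_region" using e by (auto simp: d step_region_def)
  show "q - r \<in> Sigma_set 1" using e c by (auto simp: d Sigma_set_def)
  have D: "fst (q - r) + snd (q - r) = int (c1 + c2)" by (simp add: d)
  then have "kernel_gauge q - kernel_gauge r
      = potential q - potential r + (4 + ln 8) * real (c1 + c2)"
    unfolding kernel_gauge_def by (simp add: algebra_simps flip: of_int_diff)
  moreover have "step_profile (q - r) = 3 * exp 4 * (1/8) ^ (c1 + c2)"
    using T D by (simp add: step_profile_def nat_int_add)
  ultimately have "exp (kernel_gauge q - kernel_gauge r) * step_profile (q - r) / 3
      = exp 4 * exp (potential q - potential r + 4 * (real c1 + real c2))"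
    using exp_four_mult_eq[of "c1 + c2"] by (simp add: exp_add)
  with le show "G1 r s * G2 s q
      \<le> ennreal (exp (kernel_gauge q - kernel_gauge r) * step_profile (q - r) / 3)"
    by simp
qed

lemma gprod_G1_G2_support: "gprod G1 G2 r q \<noteq> 0 \<Longrightarrow> q - r \<in> Sigma_set 1"
  by (erule gprod_nonzeroE) (rule G1_G2_term_le)

lemma gprod_G1_G2_le:
  "gprod G1 G2 r q \<le> ennreal (exp (kernel_gauge q - kernel_gauge r) * step_profile (q - r))"
proof -
  define f where "f s = G1 r s * G2 s q" for s
  define M where "M = (\<lambda>e::int. r + (-2 * e, 2 * e)) ` {-1, 0, 1}"
  define K where "K = exp (kernel_gauge q - kernel_gauge r) * step_profile (q - r) / 3"
  have f_M: "f s = 0" if "s \<notin> M" for s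
  proof (rule ccontr)
    assume "f s \<noteq> 0"
    then have "G1 r s \<noteq> 0" by (auto simp: f_def)
    then obtain e :: int where "e \<in> {-1, 0, 1}" "s = r + (-2 * e, 2 * e)"
      by (rule G1_nonzero_cases)
    with that show False unfolding M_def by blast
  qed
  have f_K: "f s \<le> ennreal K" for s
  proof (cases "f s = 0")
    case False
    then show ?thesis using G1_G2_term_le(3)[of r s q] by (simp add: f_def K_def)
  qed simp
  have "gprod G1 G2 r q = infsum f M"
    unfolding gprod_def f_def[symmetric] by (rule infsum_cong_neutral) (use f_M in auto)
  also have "\<dots> = sum f M" by (simp add: M_def)
  also have "\<dots> \<le> of_nat (card M) * ennreal K" by (rule sum_bounded_above) (rule f_K)
  also have "\<dots> \<le> 3 * ennreal K"
    using card_image_le[of "{-1, 0, 1 :: int}"] unfolding M_def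
    by (intro mult_right_mono) (auto simp: numeral_3_eq_3)
  also have "\<dots> = ennreal (exp (kernel_gauge q - kernel_gauge r) * step_profile (q - r))"
    using ennreal_mult'[of 3 K] by (simp add: K_def)
  finally show ?thesis .
qed

lemma sum_step_profile_le:
  assumes "finite F"
  shows "sum step_profile F \<le> 192 * exp 4"
proof -
  define \<phi> where "\<phi> v = (nat (snd v + 2), nat (fst v + snd v))" for v :: "int \<times> int"
  define T where "T = F \<inter> step_region"
  define w where "w z = (1/2::real) ^ fst z * (1/2) ^ snd z" for z :: "nat \<times> nat"
  have "inj_on \<phi> T"
    by (rule inj_onI) (auto simp: \<phi>_def T_def step_region_def prod_eq_iff)
  have "sum step_profile F = (\<Sum>v\<in>T. 3 * exp 4 * (1/8) ^ nat (fst v + snd v))"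
    using assms by (simp add: T_def step_profile_def sum.inter_restrict)
  also have "\<dots> \<le> (\<Sum>v\<in>T. 3 * exp 4 * (16 * w (\<phi> v)))"
    by (intro sum_mono mult_left_mono)
      (auto simp: T_def step_region_def w_def \<phi>_def intro!: eighth_power_le_half_powers)
  also have "\<dots> = 48 * exp 4 * (\<Sum>z\<in>\<phi> ` T. w z)"
    by (simp add: sum.reindex[OF \<open>inj_on \<phi> T\<close>] sum_distrib_left[symmetric])
  also have "(\<Sum>z\<in>\<phi> ` T. w z) \<le> (\<Sum>z\<in>fst ` \<phi> ` T \<times> snd ` \<phi> ` T. w z)"
    using assms subset_fst_snd[of "\<phi> ` T"] by (intro sum_mono2) (auto simp: T_def w_def)
  also have "\<dots> = (\<Sum>a\<in>fst ` \<phi> ` T. (1/2) ^ a) * (\<Sum>b\<in>snd ` \<phi> ` T. (1/2) ^ b)"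
    by (simp add: w_def sum_product sum.cartesian_product case_prod_beta)
  also have "\<dots> \<le> 2 * 2"
    using assms by (intro mult_mono sum_half_power_le) (auto simp: T_def intro: sum_nonneg)
  finally show ?thesis by simp
qed

lemma gpow_G1_G2_le:
  "l \<ge> 1 \<Longrightarrow> gpow (gprod G1 G2) l p q
     \<le> ennreal ((192 * exp 4) ^ l * exp (kernel_gauge q - kernel_gauge p))"
  by (rule gpow_le_gauge[OF gprod_G1_G2_le step_profile_nonneg sum_step_profile_le])

lemma kernel_gauge_diff_le:
  "kernel_gauge q - kernel_gauge p \<le> (1/2 + (4 + ln 8)) * (norm1 p + norm1 q)"
proof -
  define N where "N = norm1 p + norm1 q"
  define c where "c = 4 + ln (8::real)"
  have "potential q - potential p \<le> N / 2"
    using abs_potential_le[of p] abs_potential_le[of q] by (auto simp: N_def norm1_def)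
  moreover have "c * real_of_int (fst q + snd q - (fst p + snd p)) \<le> c * N"
    by (intro mult_left_mono) (auto simp: c_def N_def norm1_def)
  moreover have "kernel_gauge q - kernel_gauge p
      = potential q - potential p + c * real_of_int (fst q + snd q - (fst p + snd p))"
    by (simp add: kernel_gauge_def c_def algebra_simps)
  moreover have "(1/2 + c) * N = N / 2 + c * N"
    by (simp add: algebra_simps)
  ultimately have "kernel_gauge q - kernel_gauge p \<le> (1/2 + c) * N"
    by linarith
  then show ?thesis by (simp only: c_def N_def)
qed

theorem mainTheorem11:
  shows "(\<exists>C3 :: real. C3 > 0 \<and>
            (\<forall>l :: nat. \<forall>p q :: int \<times> int. l \<ge> 1 \<longrightarrow> fst p \<ge> 0 \<longrightarrow> fst q \<ge> 0 \<longrightarrow>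
               gpow (gprod G1 G2) l p q \<le> ennreal (C3 powr (norm1 p + norm1 q))))
       \<and> (\<forall>l :: nat. \<forall>p q :: int \<times> int. l \<ge> 1 \<longrightarrow> fst p \<ge> 0 \<longrightarrow> fst q \<ge> 0 \<longrightarrow>
               gpow (gprod G1 G2) l p q \<noteq> 0 \<longrightarrow> q - p \<in> Sigma_set l)"
proof -
  define C where "C = 192 * exp 4 * exp (1/2 + (4 + ln 8 :: real))"
  have "gpow (gprod G1 G2) l p q \<le> ennreal (C powr (norm1 p + norm1 q))" if "l \<ge> 1" for l p q
  proof (cases "gpow (gprod G1 G2) l p q = 0")
    case False
    then have "real l \<le> norm1 p + norm1 q"
      using gpow_support[OF gprod_G1_G2_support \<open>l \<ge> 1\<close>] Sigma_set_le_norm1 by blast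
    then have "(192 * exp 4) ^ l * exp (kernel_gauge q - kernel_gauge p)
        \<le> C powr (norm1 p + norm1 q)"
      unfolding C_def using kernel_gauge_diff_le exp_ge_add_one_self[of "4::real"]
      by (intro power_mult_exp_le_powr) simp_all
    then show ?thesis
      by (rule order_trans[OF gpow_G1_G2_le[OF \<open>l \<ge> 1\<close>] ennreal_leI])
  qed simp
  moreover have "C > 0" by (simp add: C_def)
  ultimately show ?thesis
    using gpow_support[OF gprod_G1_G2_support] by blast
qed

end
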